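(* Let $G$ be a strategic game and $\phi=(\phi_1,\dots,\phi_n)$ with each $\phi_i$ a positive optimality condition for player $i$. Then the optimality operator $O_\phi$ is monotonic on the lattice of restrictions of $G$ ordered componentwise by inclusion.
   Context: Strategic game $G=(T_1,\dots,T_n,<_1,\dots,<_n)$ with arbitrary nonempty $T_i$, $<_i$ total linear order on $T=\prod_iT_i$, $\ge_i$ reflexive closure. Restrictions $S=(S_1,\dots,S_n)$, $S_i\subseteq T_i$, ordered by $S\subseteq S'$ iff $S_i\subseteq S'_i$ for all $i$. $\mathcal{L}_O$: first-order formulas from atoms $C(a)$, $a\ge^i_cb$ ($a,b,c$ variables or constant $o$) with $\neg,\wedge,\exists$. In an optimality model $(G,G',s)$ ($G'$ a restriction, $s\in T$) with assignment $\alpha$ ($o\mapsto s$): $C(x)$ iff $\alpha(x)_j\in G'_j$ for all $j$; $x\ge^i_zy$ iff $(\alpha(x)_i,\alpha(z)_{-i})\ge_i(\alpha(y)_i,\alpha(z)_{-i})$. An optimality condition for $i$ is a closed formula using only $\ge^i$; it is positive if every occurrence of $C(\cdot)$ lies under an even number of negation signs. $\phi_i(s_i,S)$ means $(G,S,s)\models\phi_i$ for a profile $s$ with $i$-th component $s_i$. Optimality operator: $O_\phi(S)=\prod_{i=1}^n\{s_i\in S_i:\phi_i(s_i,S)\}$. *)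

theory Defs
  imports "HOL-Library.FuncSet"
begin

text \<open>Players are 0..n-1. All strategies live in one type 'a; player i's strategy
  set is T i. A strategy profile is an element of PiE {..<n} T.
  ge i is the reflexive preference relation of player i on profiles:
  (p, q) \<in> ge i means p \<ge>_i q.\<close>

type_synonym 'a profile = "nat \<Rightarrow> 'a"

definition profiles :: "nat \<Rightarrow> (nat \<Rightarrow> 'a set) \<Rightarrow> 'a profile set" where
  "profiles n T = PiE {..<n} T"

definition strategic_game ::
  "nat \<Rightarrow> (nat \<Rightarrow> 'a set) \<Rightarrow> (nat \<Rightarrow> ('a profile \<times> 'a profile) set) \<Rightarrow> bool" where
  "strategic_game n T ge \<longleftrightarrow>
     (\<forall>i<n. T i \<noteq> {}) \<and> (\<forall>i<n. linear_order_on (profiles n T) (ge i))"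

definition restriction :: "nat \<Rightarrow> (nat \<Rightarrow> 'a set) \<Rightarrow> (nat \<Rightarrow> 'a set) \<Rightarrow> bool" where
  "restriction n T S \<longleftrightarrow> (\<forall>i<n. S i \<subseteq> T i)"

definition restr_le :: "nat \<Rightarrow> (nat \<Rightarrow> 'a set) \<Rightarrow> (nat \<Rightarrow> 'a set) \<Rightarrow> bool" where
  "restr_le n S S' \<longleftrightarrow> (\<forall>i<n. S i \<subseteq> S' i)"

text \<open>The language L_O. Terms: variables or the constant o.
  Ge i a b c encodes the atom  a \<ge>^i_c b.\<close>

datatype trm = V nat | Oc

datatype form =
    C trm
  | Ge nat trm trm trm
  | Neg form
  | Conj form form
  | Ex nat form

fun eval_trm :: "'a profile \<Rightarrow> (nat \<Rightarrow> 'a profile) \<Rightarrow> trm \<Rightarrow> 'a profile" where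
  "eval_trm s \<alpha> (V x) = \<alpha> x"
| "eval_trm s \<alpha> Oc = s"

fun sat :: "nat \<Rightarrow> (nat \<Rightarrow> 'a set) \<Rightarrow> (nat \<Rightarrow> ('a profile \<times> 'a profile) set)
            \<Rightarrow> (nat \<Rightarrow> 'a set) \<Rightarrow> 'a profile \<Rightarrow> (nat \<Rightarrow> 'a profile) \<Rightarrow> form \<Rightarrow> bool" where
  "sat n T ge S s \<alpha> (C t) = (\<forall>j<n. eval_trm s \<alpha> t j \<in> S j)"
| "sat n T ge S s \<alpha> (Ge i a b c) =
     (((eval_trm s \<alpha> c)(i := eval_trm s \<alpha> a i),
       (eval_trm s \<alpha> c)(i := eval_trm s \<alpha> b i)) \<in> ge i)"
| "sat n T ge S s \<alpha> (Neg f) = (\<not> sat n T ge S s \<alpha> f)"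
| "sat n T ge S s \<alpha> (Conj f g) = (sat n T ge S s \<alpha> f \<and> sat n T ge S s \<alpha> g)"
| "sat n T ge S s \<alpha> (Ex x f) = (\<exists>p\<in>profiles n T. sat n T ge S s (\<alpha>(x := p)) f)"

fun fv_trm :: "trm \<Rightarrow> nat set" where
  "fv_trm (V x) = {x}"
| "fv_trm Oc = {}"

fun fv :: "form \<Rightarrow> nat set" where
  "fv (C t) = fv_trm t"
| "fv (Ge i a b c) = fv_trm a \<union> fv_trm b \<union> fv_trm c"
| "fv (Neg f) = fv f"
| "fv (Conj f g) = fv f \<union> fv g"
| "fv (Ex x f) = fv f - {x}"

definition closed :: "form \<Rightarrow> bool" where
  "closed f \<longleftrightarrow> fv f = {}"

fun only_player :: "nat \<Rightarrow> form \<Rightarrow> bool" where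
  "only_player i (C t) = True"
| "only_player i (Ge j a b c) = (j = i)"
| "only_player i (Neg f) = only_player i f"
| "only_player i (Conj f g) = (only_player i f \<and> only_player i g)"
| "only_player i (Ex x f) = only_player i f"

definition optimality_condition :: "nat \<Rightarrow> form \<Rightarrow> bool" where
  "optimality_condition i f \<longleftrightarrow> closed f \<and> only_player i f"

text \<open>even_pol b f: b is True iff we are currently under an even number of
  negations; every occurrence of C must be under an even number.\<close>
fun even_pol :: "bool \<Rightarrow> form \<Rightarrow> bool" where
  "even_pol b (C t) = b"
| "even_pol b (Ge i a c d) = True"
| "even_pol b (Neg f) = even_pol (\<not> b) f"
| "even_pol b (Conj f g) = (even_pol b f \<and> even_pol b g)"
| "even_pol b (Ex x f) = even_pol b f"

definition positive :: "form \<Rightarrow> bool" where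
  "positive f \<longleftrightarrow> even_pol True f"

definition models :: "nat \<Rightarrow> (nat \<Rightarrow> 'a set) \<Rightarrow> (nat \<Rightarrow> ('a profile \<times> 'a profile) set)
            \<Rightarrow> (nat \<Rightarrow> 'a set) \<Rightarrow> 'a profile \<Rightarrow> form \<Rightarrow> bool" where
  "models n T ge S s f \<longleftrightarrow> (\<forall>\<alpha>. sat n T ge S s \<alpha> f)"

text \<open>phi_i(s_i, S): (G,S,s) \<Turnstile> phi_i for a profile s whose i-th component is s_i.\<close>
definition opt_holds :: "nat \<Rightarrow> (nat \<Rightarrow> 'a set) \<Rightarrow> (nat \<Rightarrow> ('a profile \<times> 'a profile) set)
            \<Rightarrow> (nat \<Rightarrow> form) \<Rightarrow> nat \<Rightarrow> 'a \<Rightarrow> (nat \<Rightarrow> 'a set) \<Rightarrow> bool" where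
  "opt_holds n T ge \<phi> i si S \<longleftrightarrow>
     (\<exists>s\<in>profiles n T. s i = si \<and> models n T ge S s (\<phi> i))"

definition opt_op :: "nat \<Rightarrow> (nat \<Rightarrow> 'a set) \<Rightarrow> (nat \<Rightarrow> ('a profile \<times> 'a profile) set)
            \<Rightarrow> (nat \<Rightarrow> form) \<Rightarrow> (nat \<Rightarrow> 'a set) \<Rightarrow> (nat \<Rightarrow> 'a set)" where
  "opt_op n T ge \<phi> S = (\<lambda>i. {si \<in> S i. opt_holds n T ge \<phi> i si S})"

end

theory Submission
  imports Defs
begin

(* Enlarging a restriction S to S' (componentwise) can only make
   atoms C(x) true, never false; the comparison atoms a \<ge>^i_c b do not depend on
   the restriction at all.  Hence, by induction on formulas, truth is preserved
   from S to S' for formulas in which C occurs only positively, and from S' to S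
   for formulas in which C occurs only negatively; negation swaps the two
   polarities (lemma sat_polarity_mono).  A positive optimality condition is
   therefore upward closed in the restriction (models_positive_mono), so is the
   predicate phi_i(s_i, S) (opt_holds_mono), and the optimality operator, which
   intersects S_i with this predicate, is monotone. *)

lemma sat_polarity_mono:
  assumes le: "\<forall>j<n. S j \<subseteq> S' j"
    and "even_pol b f"
  shows "(b \<longrightarrow> sat n T ge S s \<alpha> f \<longrightarrow> sat n T ge S' s \<alpha> f)
       \<and> (\<not> b \<longrightarrow> sat n T ge S' s \<alpha> f \<longrightarrow> sat n T ge S s \<alpha> f)"
  using assms(2)
proof (induction f arbitrary: b \<alpha>)
  case (C t)
  then show ?case using le by auto
next
  case (Ge i a c d)
  then show ?case by simp
next
  case (Neg f)
  then show ?case by (cases b) fastforce+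
next
  case (Conj f g)
  then show ?case by (cases b) fastforce+
next
  case (Ex x f)
  then show ?case by (cases b) fastforce+
qed

lemma models_positive_mono:
  assumes "\<forall>j<n. S j \<subseteq> S' j" and "positive f"
    and "models n T ge S s f"
  shows "models n T ge S' s f"
  using sat_polarity_mono[OF assms(1), of True f] assms(2,3)
  by (simp add: models_def positive_def)

lemma opt_holds_mono:
  assumes "\<forall>j<n. S j \<subseteq> S' j" and "positive (\<phi> i)"
    and "opt_holds n T ge \<phi> i si S"
  shows "opt_holds n T ge \<phi> i si S'"
  using assms models_positive_mono unfolding opt_holds_def by blast

theorem mainTheorem7:
  assumes "strategic_game n T ge"
    and "\<forall>i<n. optimality_condition i (\<phi> i) \<and> positive (\<phi> i)"
    and "restriction n T S" and "restriction n T S'"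
    and "restr_le n S S'"
  shows "restr_le n (opt_op n T ge \<phi> S) (opt_op n T ge \<phi> S')"
proof -
  have le: "\<forall>j<n. S j \<subseteq> S' j"
    using assms(5) by (simp add: restr_le_def)
  have "opt_op n T ge \<phi> S i \<subseteq> opt_op n T ge \<phi> S' i" if "i < n" for i
  proof
    fix si assume "si \<in> opt_op n T ge \<phi> S i"
    then have "si \<in> S i" and "opt_holds n T ge \<phi> i si S"
      by (simp_all add: opt_op_def)
    moreover have "positive (\<phi> i)" using assms(2) \<open>i < n\<close> by blast
    ultimately have "si \<in> S' i" and "opt_holds n T ge \<phi> i si S'"
      using le \<open>i < n\<close> opt_holds_mono[OF le] by blast+
    then show "si \<in> opt_op n T ge \<phi> S' i" by (simp add: opt_op_def)
  qed
  then show ?thesis by (simp add: restr_le_def)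
qed

end
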